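(* Let $\mathscr T$ be a functor satisfying (T1)–(T4) and let $\mathfrak K=(K,\bigsqcup,\odot,{}^*,{\sim},e)$ be a $\mathscr T$-based orthomodular dynamic algebra. Then for each $k\in K$ there exists a unique subset $S\subseteq\mathscr T(K)$ with $k=\bigsqcup S$.
   Context: An involutive unital quantale is $(Q,\bigsqcup,\odot,{}^*,e)$: $Q$ a complete join-semilattice, $\odot$ associative and distributing over arbitrary joins in each argument, $e$ a unit, ${}^*$ with $x^{**}=x$, $(x\odot y)^*=y^*\odot x^*$, $(\bigsqcup x_i)^*=\bigsqcup x_i^*$. An involutive generalized dynamic algebra (IDA) is such a quantale with ${\sim}\colon K\to K$ satisfying, for all $x,y$ and families $(x_i)$: ${\sim}(x\odot{\sim}{\sim}y)={\sim}(x\odot y)$; ${\sim}(\bigsqcup{\sim}{\sim}x_i)={\sim}(\bigsqcup x_i)$; $({\sim}x)^*={\sim}x$; ${\sim}{\sim}({\sim}{\sim}x\odot y)={\sim}({\sim}x\sqcup{\sim}({\sim}x\sqcup y))$. Test set $\widetilde K=\{{\sim}k\}$; $\bigvee W={\sim}{\sim}\bigsqcup W$; $w^\perp={\sim}w$; $k\preceq l$ iff $\bigvee\{k,l\}=l$; $k\bullet v={\sim}{\sim}(k\odot v)$; $k\equiv l$ iff $k\bullet w=l\bullet w$ for all $w\in\widetilde K$. IDA morphisms preserve joins, $\odot$, ${}^*$, unit, ${\sim}$ (category $\mathbb{IDA}$); semi-Foulis means $(\widetilde K,\preceq,{}^\perp)$ is a complete orthomodular lattice. $\mathbb{IM}$: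 involutive monoids and their homomorphisms. For a complete orthomodular lattice $\mathcal M$: $\pi_m(x)=m\wedge(m^\perp\vee x)$; $\mathbf{Lin}(\mathcal M)$ is the set of maps $f$ admitting $f^*$ with $f(x)\le y^\perp\iff x\le f^*(y)^\perp$, an IDA under pointwise joins, composition, ${}^*$, $\mathrm{id}$ and ${\sim}f=\pi_{f(1)^\perp}$; for an involutive submonoid $L\supseteq\{\pi_m\}$, $\mathscr P(L)$ is the IDA of subsets of $L$ with union, setwise composition and involution, unit $\{\mathrm{id}\}$, ${\sim}A=\{\pi_{(\bigvee_{a\in A}a(1))^\perp}\}$. $\mathscr T\colon\mathbb{IDA}\to\mathbb{IM}$ satisfies: (T1) $\widetilde K\subseteq\mathscr T(K)\subseteq K$ and $\mathscr T(K)$ is an involutive submonoid of $(K,\odot,{}^*,e)$; (T2) for semi-Foulis $\mathfrak K$ with $s=t\iff s\equiv t$ on $\mathscr T(K)$, $k\mapsto k\bullet(-)$ is an isomorphism $\mathscr T(\mathfrak K)\to\mathscr T(\mathbf{Lin}(\widetilde{\mathfrak K}))$; (T3) $f\mapsto\{f\}$ is an isomorphism $\mathscr T(\mathbf{Lin}(\mathcal M))\to\mathscr T(\mathscr P(\mathscr T(\mathbf{Lin}(\mathcal M))))$; (T4) $\mathscr T(f)$ is the restriction of $f$. A $\mathscr T$-based orthomodular dynamic algebra is an IDA with: (TODA1) $(\widetilde K,\preceq,{}^\perp)$ a complete orthomodular lattice; (TODA2) every $A$ with $\mathscr T(K)\subseteq A\subseteq K$ closed under $\odot$, ${}^*$,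 arbitrary joins equals $K$; (TODA3) for $S,T\subseteq\mathscr T(K)$, $\bigsqcup S=\bigsqcup T$ iff $S=T$; (TODA4) for $s,t\in\mathscr T(K)$, $s=t$ iff $s\equiv t$. *)

theory Defs
  imports Main
begin

text \<open>An IDA-structure on elements of type 'a: carrier, arbitrary join, multiplication,
  involution, the operation sim (written neg), and the unit.\<close>
record 'a ida_struct =
  carrier :: "'a set"
  Join :: "'a set \<Rightarrow> 'a"
  mult :: "'a \<Rightarrow> 'a \<Rightarrow> 'a"
  star :: "'a \<Rightarrow> 'a"
  neg :: "'a \<Rightarrow> 'a"
  unit :: "'a"

definition qle :: "('a, 'b) ida_struct_scheme \<Rightarrow> 'a \<Rightarrow> 'a \<Rightarrow> bool" where
  "qle K x y \<longleftrightarrow> Join K {x, y} = y"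

definition is_lub :: "'a set \<Rightarrow> ('a \<Rightarrow> 'a \<Rightarrow> bool) \<Rightarrow> 'a set \<Rightarrow> 'a \<Rightarrow> bool" where
  "is_lub X le W u \<longleftrightarrow> u \<in> X \<and> (\<forall>w\<in>W. le w u) \<and> (\<forall>z\<in>X. (\<forall>w\<in>W. le w z) \<longrightarrow> le u z)"

definition is_glb :: "'a set \<Rightarrow> ('a \<Rightarrow> 'a \<Rightarrow> bool) \<Rightarrow> 'a set \<Rightarrow> 'a \<Rightarrow> bool" where
  "is_glb X le W u \<longleftrightarrow> u \<in> X \<and> (\<forall>w\<in>W. le u w) \<and> (\<forall>z\<in>X. (\<forall>w\<in>W. le z w) \<longrightarrow> le z u)"

definition partial_order_on' :: "'a set \<Rightarrow> ('a \<Rightarrow> 'a \<Rightarrow> bool) \<Rightarrow> bool" where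
  "partial_order_on' X le \<longleftrightarrow>
     (\<forall>x\<in>X. le x x) \<and>
     (\<forall>x\<in>X. \<forall>y\<in>X. le x y \<and> le y x \<longrightarrow> x = y) \<and>
     (\<forall>x\<in>X. \<forall>y\<in>X. \<forall>z\<in>X. le x y \<and> le y z \<longrightarrow> le x z)"

definition complete_oml :: "'a set \<Rightarrow> ('a \<Rightarrow> 'a \<Rightarrow> bool) \<Rightarrow> ('a \<Rightarrow> 'a) \<Rightarrow> bool" where
  "complete_oml X le perp \<longleftrightarrow>
     partial_order_on' X le \<and>
     (\<forall>W\<subseteq>X. \<exists>u. is_lub X le W u) \<and>
     (\<forall>x\<in>X. perp x \<in> X) \<and>
     (\<forall>x\<in>X. perp (perp x) = x) \<and>
     (\<forall>x\<in>X. \<forall>y\<in>X. le x y \<longrightarrow> le (perp y) (perp x)) \<and>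
     (\<forall>x\<in>X. \<forall>b. is_glb X le {x, perp x} b \<longrightarrow> (\<forall>z\<in>X. le b z)) \<and>
     (\<forall>x\<in>X. \<forall>y\<in>X. le x y \<longrightarrow>
        (\<forall>m j. is_glb X le {y, perp x} m \<longrightarrow> is_lub X le {x, m} j \<longrightarrow> j = y))"

definition inv_quantale :: "('a, 'b) ida_struct_scheme \<Rightarrow> bool" where
  "inv_quantale K \<longleftrightarrow>
     partial_order_on' (carrier K) (qle K) \<and>
     (\<forall>S\<subseteq>carrier K. is_lub (carrier K) (qle K) S (Join K S)) \<and>
     (\<forall>x\<in>carrier K. \<forall>y\<in>carrier K. mult K x y \<in> carrier K) \<and>
     (\<forall>x\<in>carrier K. \<forall>y\<in>carrier K. \<forall>z\<in>carrier K. mult K (mult K x y) z = mult K x (mult K y z)) \<and>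
     (\<forall>x\<in>carrier K. \<forall>S\<subseteq>carrier K. mult K x (Join K S) = Join K ((\<lambda>s. mult K x s) ` S)) \<and>
     (\<forall>x\<in>carrier K. \<forall>S\<subseteq>carrier K. mult K (Join K S) x = Join K ((\<lambda>s. mult K s x) ` S)) \<and>
     unit K \<in> carrier K \<and>
     (\<forall>x\<in>carrier K. mult K (unit K) x = x \<and> mult K x (unit K) = x) \<and>
     (\<forall>x\<in>carrier K. star K x \<in> carrier K) \<and>
     (\<forall>x\<in>carrier K. star K (star K x) = x) \<and>
     (\<forall>x\<in>carrier K. \<forall>y\<in>carrier K. star K (mult K x y) = mult K (star K y) (star K x)) \<and>
     (\<forall>S\<subseteq>carrier K. star K (Join K S) = Join K (star K ` S))"

definition ida :: "('a, 'b) ida_struct_scheme \<Rightarrow> bool" where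
  "ida K \<longleftrightarrow> inv_quantale K \<and>
     (\<forall>x\<in>carrier K. neg K x \<in> carrier K) \<and>
     (\<forall>x\<in>carrier K. \<forall>y\<in>carrier K.
        neg K (mult K x (neg K (neg K y))) = neg K (mult K x y)) \<and>
     (\<forall>S\<subseteq>carrier K. neg K (Join K ((\<lambda>x. neg K (neg K x)) ` S)) = neg K (Join K S)) \<and>
     (\<forall>x\<in>carrier K. star K (neg K x) = neg K x) \<and>
     (\<forall>x\<in>carrier K. \<forall>y\<in>carrier K.
        neg K (neg K (mult K (neg K (neg K x)) y)) =
        neg K (Join K {neg K x, neg K (Join K {neg K x, y})}))"

definition tests :: "('a, 'b) ida_struct_scheme \<Rightarrow> 'a set" where
  "tests K = neg K ` carrier K"

definition tjoin :: "('a, 'b) ida_struct_scheme \<Rightarrow> 'a set \<Rightarrow> 'a" where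
  "tjoin K W = neg K (neg K (Join K W))"

definition tle :: "('a, 'b) ida_struct_scheme \<Rightarrow> 'a \<Rightarrow> 'a \<Rightarrow> bool" where
  "tle K k l \<longleftrightarrow> tjoin K {k, l} = l"

definition bullet :: "('a, 'b) ida_struct_scheme \<Rightarrow> 'a \<Rightarrow> 'a \<Rightarrow> 'a" where
  "bullet K k v = neg K (neg K (mult K k v))"

definition act_equiv :: "('a, 'b) ida_struct_scheme \<Rightarrow> 'a \<Rightarrow> 'a \<Rightarrow> bool" where
  "act_equiv K k l \<longleftrightarrow> (\<forall>w\<in>tests K. bullet K k w = bullet K l w)"

definition ida_hom :: "('a, 'b) ida_struct_scheme \<Rightarrow> ('c, 'd) ida_struct_scheme \<Rightarrow> ('a \<Rightarrow> 'c) \<Rightarrow> bool" where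
  "ida_hom K L f \<longleftrightarrow> ida K \<and> ida L \<and>
     (\<forall>x\<in>carrier K. f x \<in> carrier L) \<and>
     (\<forall>S\<subseteq>carrier K. f (Join K S) = Join L (f ` S)) \<and>
     (\<forall>x\<in>carrier K. \<forall>y\<in>carrier K. f (mult K x y) = mult L (f x) (f y)) \<and>
     (\<forall>x\<in>carrier K. f (star K x) = star L (f x)) \<and>
     f (unit K) = unit L \<and>
     (\<forall>x\<in>carrier K. f (neg K x) = neg L (f x))"

definition T1 :: "('a ida_struct \<Rightarrow> 'a set) \<Rightarrow> bool" where
  "T1 T \<longleftrightarrow> (\<forall>K. ida K \<longrightarrow>
     tests K \<subseteq> T K \<and> T K \<subseteq> carrier K \<and> unit K \<in> T K \<and>
     (\<forall>x\<in>T K. \<forall>y\<in>T K. mult K x y \<in> T K) \<and> (\<forall>x\<in>T K. star K x \<in> T K))"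

text \<open>(T4) together with functoriality on arrows: T(f) is the restriction of f,
  which must map T(K) into T(L).\<close>
definition T4 :: "('a ida_struct \<Rightarrow> 'a set) \<Rightarrow> bool" where
  "T4 T \<longleftrightarrow> (\<forall>K L f. ida_hom K L f \<longrightarrow> f ` T K \<subseteq> T L)"

definition T_oda :: "('a ida_struct \<Rightarrow> 'a set) \<Rightarrow> 'a ida_struct \<Rightarrow> bool" where
  "T_oda T K \<longleftrightarrow> ida K \<and>
     complete_oml (tests K) (tle K) (neg K) \<and>
     (\<forall>A. T K \<subseteq> A \<and> A \<subseteq> carrier K \<and>
          (\<forall>x\<in>A. \<forall>y\<in>A. mult K x y \<in> A) \<and> (\<forall>x\<in>A. star K x \<in> A) \<and>
          (\<forall>S\<subseteq>A. Join K S \<in> A) \<longrightarrow> A = carrier K) \<and>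
     (\<forall>S U. S \<subseteq> T K \<longrightarrow> U \<subseteq> T K \<longrightarrow> (Join K S = Join K U \<longleftrightarrow> S = U)) \<and>
     (\<forall>s\<in>T K. \<forall>t\<in>T K. s = t \<longleftrightarrow> act_equiv K s t)"

end

theory Submission
  imports Defs
begin

text \<open>The joins of subsets of T(K) contain T(K) and are closed under multiplication, involution
  and joins, because multiplication and involution distribute over joins and a join of joins is
  a join. So by (TODA2) they exhaust K, and (TODA3) makes the representing subset unique.\<close>

lemma is_lub_unique:
  assumes "partial_order_on' X le" and "is_lub X le W u" and "is_lub X le W v"
  shows "u = v"
proof -
  have "u \<in> X" "v \<in> X" "le u v" "le v u"
    using assms(2,3) unfolding is_lub_def by blast+
  then show ?thesis using assms(1) unfolding partial_order_on'_def by blast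
qed

lemma inv_quantaleD:
  assumes "inv_quantale K"
  shows inv_quantale_partial_order: "partial_order_on' (carrier K) (qle K)"
    and inv_quantale_Join_is_lub: "S \<subseteq> carrier K \<Longrightarrow> is_lub (carrier K) (qle K) S (Join K S)"
    and inv_quantale_mult_closed: "x \<in> carrier K \<Longrightarrow> y \<in> carrier K \<Longrightarrow> mult K x y \<in> carrier K"
    and inv_quantale_mult_Join_distrib: "x \<in> carrier K \<Longrightarrow> S \<subseteq> carrier K \<Longrightarrow>
      mult K x (Join K S) = Join K ((\<lambda>s. mult K x s) ` S)"
    and inv_quantale_Join_mult_distrib: "x \<in> carrier K \<Longrightarrow> S \<subseteq> carrier K \<Longrightarrow>
      mult K (Join K S) x = Join K ((\<lambda>s. mult K s x) ` S)"
    and inv_quantale_star_Join: "S \<subseteq> carrier K \<Longrightarrow> star K (Join K S) = Join K (star K ` S)"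
  using assms unfolding inv_quantale_def by auto

lemma inv_quantale_Join_closed:
  assumes "inv_quantale K" and "S \<subseteq> carrier K"
  shows "Join K S \<in> carrier K"
  using inv_quantale_Join_is_lub[OF assms] unfolding is_lub_def by blast

lemma inv_quantale_Join_singleton:
  assumes "inv_quantale K" and "x \<in> carrier K"
  shows "Join K {x} = x"
proof -
  have "qle K x x"
    using inv_quantale_partial_order[OF assms(1)] assms(2) unfolding partial_order_on'_def by blast
  then show ?thesis unfolding qle_def by simp
qed

lemma inv_quantale_Join_Union:
  assumes K: "inv_quantale K" and F: "\<And>S. S \<in> F \<Longrightarrow> S \<subseteq> carrier K"
  shows "Join K (Join K ` F) = Join K (\<Union>F)"
proof -
  let ?J = "Join K (Join K ` F)"
  have qle_trans: "\<And>x y z. x \<in> carrier K \<Longrightarrow> y \<in> carrier K \<Longrightarrow> z \<in> carrier K \<Longrightarrow>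
      qle K x y \<Longrightarrow> qle K y z \<Longrightarrow> qle K x z"
    using inv_quantale_partial_order[OF K] unfolding partial_order_on'_def by blast
  have lub_S: "is_lub (carrier K) (qle K) S (Join K S)" if "S \<in> F" for S
    using inv_quantale_Join_is_lub[OF K F[OF that]] .
  have "Join K ` F \<subseteq> carrier K"
    using inv_quantale_Join_closed[OF K] F by blast
  then have lub_F: "is_lub (carrier K) (qle K) (Join K ` F) ?J"
    by (rule inv_quantale_Join_is_lub[OF K])
  have "is_lub (carrier K) (qle K) (\<Union>F) ?J"
    unfolding is_lub_def
  proof (intro conjI ballI impI)
    show J: "?J \<in> carrier K"
      using lub_F unfolding is_lub_def by blast
    fix x assume "x \<in> \<Union>F"
    then obtain S where S: "S \<in> F" "x \<in> S" by blast
    have "qle K x (Join K S)" "Join K S \<in> carrier K"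
      using lub_S[OF S(1)] S(2) unfolding is_lub_def by blast+
    moreover have "qle K (Join K S) ?J"
      using lub_F S(1) unfolding is_lub_def by blast
    ultimately show "qle K x ?J"
      using qle_trans J F[OF S(1)] S(2) by blast
  next
    fix z assume "z \<in> carrier K" and "\<forall>x\<in>\<Union>F. qle K x z"
    then have "\<forall>w\<in>Join K ` F. qle K w z"
      using lub_S unfolding is_lub_def by blast
    then show "qle K ?J z"
      using lub_F \<open>z \<in> carrier K\<close> unfolding is_lub_def by blast
  qed
  moreover have "\<Union>F \<subseteq> carrier K" using F by blast
  ultimately show ?thesis
    using is_lub_unique[OF inv_quantale_partial_order[OF K]] inv_quantale_Join_is_lub[OF K] by blast
qed

definition join_closure :: "('a, 'b) ida_struct_scheme \<Rightarrow> 'a set \<Rightarrow> 'a set" where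
  "join_closure K M = {Join K S | S. S \<subseteq> M}"

lemma join_closureI: "S \<subseteq> M \<Longrightarrow> Join K S \<in> join_closure K M"
  unfolding join_closure_def by blast

lemma join_closureE:
  assumes "x \<in> join_closure K M"
  obtains S where "S \<subseteq> M" and "x = Join K S"
  using assms unfolding join_closure_def by blast

lemma join_closure_subset_carrier:
  assumes "inv_quantale K" and "M \<subseteq> carrier K"
  shows "join_closure K M \<subseteq> carrier K"
  using assms inv_quantale_Join_closed unfolding join_closure_def by blast

lemma subset_join_closure:
  assumes "inv_quantale K" and "M \<subseteq> carrier K"
  shows "M \<subseteq> join_closure K M"
proof
  fix x assume "x \<in> M"
  then have "Join K {x} \<in> join_closure K M" by (intro join_closureI) simp
  then show "x \<in> join_closure K M"
    using inv_quantale_Join_singleton[OF assms(1)] \<open>x \<in> M\<close> assms(2) by auto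
qed

lemma join_closure_Join_closed:
  assumes K: "inv_quantale K" and M: "M \<subseteq> carrier K" and X: "X \<subseteq> join_closure K M"
  shows "Join K X \<in> join_closure K M"
proof -
  have "\<forall>x\<in>X. \<exists>S. S \<subseteq> M \<and> x = Join K S"
    using X unfolding join_closure_def by blast
  then obtain rep where rep: "\<And>x. x \<in> X \<Longrightarrow> rep x \<subseteq> M \<and> x = Join K (rep x)"
    by metis
  have "X = Join K ` rep ` X" using rep by force
  then have "Join K X = Join K (\<Union>(rep ` X))"
    using inv_quantale_Join_Union[OF K, of "rep ` X"] rep M by force
  moreover have "\<Union>(rep ` X) \<subseteq> M" using rep by blast
  ultimately show ?thesis by (simp add: join_closureI)
qed

lemma join_closure_mult_closed:
  assumes K: "inv_quantale K" and M: "M \<subseteq> carrier K"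
    and mult_M: "\<And>x y. x \<in> M \<Longrightarrow> y \<in> M \<Longrightarrow> mult K x y \<in> M"
    and x: "x \<in> join_closure K M" and y: "y \<in> join_closure K M"
  shows "mult K x y \<in> join_closure K M"
proof -
  obtain S where S: "S \<subseteq> M" "x = Join K S" using x by (rule join_closureE)
  obtain U where U: "U \<subseteq> M" "y = Join K U" using y by (rule join_closureE)
  have SK: "S \<subseteq> carrier K" and UK: "U \<subseteq> carrier K" using S U M by auto
  define row where "row s = (\<lambda>u. mult K s u) ` U" for s
  have "mult K x y = Join K ((\<lambda>s. mult K s y) ` S)"
    using inv_quantale_Join_mult_distrib[OF K inv_quantale_Join_closed[OF K UK] SK] S U by simp
  also have "(\<lambda>s. mult K s y) ` S = Join K ` row ` S"
    using inv_quantale_mult_Join_distrib[OF K _ UK] SK U(2) unfolding row_def image_image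
    by (intro image_cong) auto
  also have "Join K (Join K ` row ` S) = Join K (\<Union>(row ` S))"
    using inv_quantale_mult_closed[OF K] SK UK unfolding row_def
    by (intro inv_quantale_Join_Union[OF K]) blast
  finally have "mult K x y = Join K (\<Union>(row ` S))" .
  moreover have "\<Union>(row ` S) \<subseteq> M" using S U mult_M unfolding row_def by blast
  ultimately show ?thesis by (simp add: join_closureI)
qed

lemma join_closure_star_closed:
  assumes K: "inv_quantale K" and M: "M \<subseteq> carrier K"
    and star_M: "\<And>x. x \<in> M \<Longrightarrow> star K x \<in> M"
    and x: "x \<in> join_closure K M"
  shows "star K x \<in> join_closure K M"
proof -
  obtain S where S: "S \<subseteq> M" "x = Join K S" using x by (rule join_closureE)
  then have "star K x = Join K (star K ` S)"
    using inv_quantale_star_Join[OF K] M by auto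
  moreover have "star K ` S \<subseteq> M" using S star_M by blast
  ultimately show ?thesis by (simp add: join_closureI)
qed

lemma T_odaD:
  assumes "T_oda T K"
  shows T_oda_ida: "ida K"
    and T_oda_generated: "\<And>A. T K \<subseteq> A \<Longrightarrow> A \<subseteq> carrier K \<Longrightarrow>
      (\<And>x y. x \<in> A \<Longrightarrow> y \<in> A \<Longrightarrow> mult K x y \<in> A) \<Longrightarrow> (\<And>x. x \<in> A \<Longrightarrow> star K x \<in> A) \<Longrightarrow>
      (\<And>S. S \<subseteq> A \<Longrightarrow> Join K S \<in> A) \<Longrightarrow> A = carrier K"
    and T_oda_Join_inj: "S \<subseteq> T K \<Longrightarrow> U \<subseteq> T K \<Longrightarrow> Join K S = Join K U \<Longrightarrow> S = U"
  using assms unfolding T_oda_def by auto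

lemma T1D:
  assumes "T1 T" and "ida K"
  shows T1_subset_carrier: "T K \<subseteq> carrier K"
    and T1_mult_closed: "x \<in> T K \<Longrightarrow> y \<in> T K \<Longrightarrow> mult K x y \<in> T K"
    and T1_star_closed: "x \<in> T K \<Longrightarrow> star K x \<in> T K"
  using assms unfolding T1_def by auto

lemma T_oda_carrier_eq_join_closure:
  assumes T: "T1 T" and K: "T_oda T K"
  shows "carrier K = join_closure K (T K)"
proof -
  have ida: "ida K" using T_oda_ida[OF K] .
  then have q: "inv_quantale K" unfolding ida_def by blast
  note TK = T1D[OF T ida]
  show ?thesis
  proof (rule T_oda_generated[OF K, symmetric])
    show "T K \<subseteq> join_closure K (T K)"
      using subset_join_closure[OF q TK(1)] .
    show "join_closure K (T K) \<subseteq> carrier K"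
      using join_closure_subset_carrier[OF q TK(1)] .
    show "\<And>x y. x \<in> join_closure K (T K) \<Longrightarrow> y \<in> join_closure K (T K) \<Longrightarrow>
        mult K x y \<in> join_closure K (T K)"
      using join_closure_mult_closed[OF q TK(1) TK(2)] .
    show "\<And>x. x \<in> join_closure K (T K) \<Longrightarrow> star K x \<in> join_closure K (T K)"
      using join_closure_star_closed[OF q TK(1) TK(3)] .
    show "\<And>S. S \<subseteq> join_closure K (T K) \<Longrightarrow> Join K S \<in> join_closure K (T K)"
      using join_closure_Join_closed[OF q TK(1)] .
  qed
qed

theorem lemma4p3:
  fixes T :: "'a ida_struct \<Rightarrow> 'a set" and K :: "'a ida_struct"
  assumes "T1 T" and "T4 T"
    and "T_oda T K"
  shows "\<forall>k\<in>carrier K. \<exists>!S. S \<subseteq> T K \<and> k = Join K S"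
proof
  fix k assume "k \<in> carrier K"
  then obtain S where "S \<subseteq> T K" and "k = Join K S"
    using T_oda_carrier_eq_join_closure[OF assms(1,3)] by (auto elim: join_closureE)
  then show "\<exists>!S. S \<subseteq> T K \<and> k = Join K S"
    using T_oda_Join_inj[OF assms(3)] by blast
qed

end
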